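(* Let $g:\mathbb N\to\mathbb C$ and suppose there exist $n_0\in\mathbb N$, $c_1,c_2\in(0,\infty)$ and $d_1,d_2\in(0,1/2)$ such that $c_1n^{-d_1}\le\prod_{k=0}^n|g(k)|\le c_2n^{d_2}$ for all $n>n_0$ (and $g(k)\neq0$ for all $k$). Then $\frac12(L_g+L_{\bar g^{-1}})$ is a time operator of $N$.
   Context: $\ell^2=\ell^2(\mathbb N)$, $\mathbb N=\{0,1,\dots\}$, basis $(\xi_n)$; $N\xi_n=n\xi_n$; $L$ left shift, $L^*$ right shift. For $h:\mathbb N\to\mathbb C\setminus\{0\}$, $h_N$ is multiplication $\xi_n\mapsto h(n)\xi_n$. For a linear operator $A$, $\mathrm D(\log A)=\{f\in\bigcap_{k\ge0}\mathrm D(A^k):\lim_K\sum_{k=1}^K\frac1k(\mathbf1-A)^kf\text{ exists}\}$, $\log Af=-\sum_{k\ge1}\frac1k(\mathbf1-A)^kf$. For such $h$, $L_h=i\{\log(\mathbf1-h_NL)-\log(\mathbf1-L^*h_N^{-1})\}$ on the intersection of the domains; $\bar g^{-1}$ denotes the function $n\mapsto 1/\overline{g(n)}$, so $L_{\bar g^{-1}}=i\{\log(\mathbf1-\bar g_N^{-1}L)-\log(\mathbf1-L^*\bar g_N)\}$. A time operator of a self-adjoint $H$ is a symmetric (densely defined) operator $T$ with $[H,T]=-i\mathbf1$ on some nonzero subspace of $\mathrm D(HT)\cap\mathrm D(TH)$. *)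

theory Defs
  imports Complex_Main
begin

type_synonym seq = "nat \<Rightarrow> complex"

definition l2 :: "seq set" where
  "l2 = {f. summable (\<lambda>n. (cmod (f n))^2)}"

definition l2norm :: "seq \<Rightarrow> real" where
  "l2norm f = sqrt (\<Sum>n. (cmod (f n))^2)"

definition l2inner :: "seq \<Rightarrow> seq \<Rightarrow> complex" where
  "l2inner f g = (\<Sum>n. cnj (f n) * g n)"

definition l2_lim :: "(nat \<Rightarrow> seq) \<Rightarrow> seq \<Rightarrow> bool" where
  "l2_lim S x \<longleftrightarrow> x \<in> l2 \<and> (\<lambda>K. l2norm (\<lambda>n. S K n - x n)) \<longlonglongrightarrow> 0"

text \<open>An operator is a pair (domain, action); the action is only meaningful on the domain.\<close>
type_synonym op = "seq set \<times> (seq \<Rightarrow> seq)"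

definition dom :: "op \<Rightarrow> seq set" where "dom A = fst A"
definition app :: "op \<Rightarrow> seq \<Rightarrow> seq" where "app A = snd A"

definition op_id :: op where "op_id = (l2, \<lambda>f. f)"

definition op_comp :: "op \<Rightarrow> op \<Rightarrow> op" where
  "op_comp A B = ({f \<in> dom B. app B f \<in> dom A}, \<lambda>f. app A (app B f))"

definition op_add :: "op \<Rightarrow> op \<Rightarrow> op" where
  "op_add A B = (dom A \<inter> dom B, \<lambda>f n. app A f n + app B f n)"

definition op_diff :: "op \<Rightarrow> op \<Rightarrow> op" where
  "op_diff A B = (dom A \<inter> dom B, \<lambda>f n. app A f n - app B f n)"

definition op_scale :: "complex \<Rightarrow> op \<Rightarrow> op" where
  "op_scale c A = (dom A, \<lambda>f n. c * app A f n)"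

primrec op_pow :: "op \<Rightarrow> nat \<Rightarrow> op" where
  "op_pow A 0 = op_id"
| "op_pow A (Suc k) = op_comp A (op_pow A k)"

definition mult_op :: "(nat \<Rightarrow> complex) \<Rightarrow> op" where
  "mult_op h = ({f \<in> l2. (\<lambda>n. h n * f n) \<in> l2}, \<lambda>f n. h n * f n)"

definition num_op :: op where "num_op = mult_op (\<lambda>n. of_nat n)"

text \<open>Left shift L xi_n = xi_(n-1), L xi_0 = 0, i.e. (L f)(n) = f(n+1).\<close>
definition lshift :: op where "lshift = (l2, \<lambda>f n. f (Suc n))"

text \<open>Right shift L* xi_n = xi_(n+1), i.e. (L* f)(n) = f(n-1), (L* f)(0) = 0.\<close>
definition rshift :: op where "rshift = (l2, \<lambda>f n. if n = 0 then 0 else f (n - 1))"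

definition log_partial :: "op \<Rightarrow> seq \<Rightarrow> nat \<Rightarrow> seq" where
  "log_partial A f K = (\<lambda>n. \<Sum>k=1..K. (1 / of_nat k) * app (op_pow (op_diff op_id A) k) f n)"

definition log_dom :: "op \<Rightarrow> seq set" where
  "log_dom A = {f. (\<forall>k. f \<in> dom (op_pow A k)) \<and> (\<exists>x. l2_lim (log_partial A f) x)}"

definition op_log :: "op \<Rightarrow> op" where
  "op_log A = (log_dom A, \<lambda>f n. - (THE x. l2_lim (log_partial A f) x) n)"

definition L_op :: "(nat \<Rightarrow> complex) \<Rightarrow> op" where
  "L_op h = op_scale \<i>
     (op_diff (op_log (op_diff op_id (op_comp (mult_op h) lshift)))
              (op_log (op_diff op_id (op_comp rshift (mult_op (\<lambda>n. 1 / h n))))))"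

definition symmetric_op :: "op \<Rightarrow> bool" where
  "symmetric_op T \<longleftrightarrow> dom T \<subseteq> l2 \<and> (\<forall>f\<in>dom T. app T f \<in> l2) \<and>
     (\<forall>f\<in>dom T. \<forall>g\<in>dom T. l2inner (app T f) g = l2inner f (app T g))"

definition densely_defined :: "op \<Rightarrow> bool" where
  "densely_defined T \<longleftrightarrow> (\<forall>f\<in>l2. \<forall>e>0. \<exists>g\<in>dom T. l2norm (\<lambda>n. f n - g n) < e)"

definition linear_subspace :: "seq set \<Rightarrow> bool" where
  "linear_subspace V \<longleftrightarrow> (\<lambda>n. 0) \<in> V \<and> (\<forall>f\<in>V. \<forall>g\<in>V. (\<lambda>n. f n + g n) \<in> V) \<and>
     (\<forall>c. \<forall>f\<in>V. (\<lambda>n. c * f n) \<in> V)"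

definition time_operator :: "op \<Rightarrow> op \<Rightarrow> bool" where
  "time_operator T H \<longleftrightarrow> symmetric_op T \<and> densely_defined T \<and>
     (\<exists>V. linear_subspace V \<and> V \<noteq> {\<lambda>n. 0} \<and>
          V \<subseteq> dom (op_comp H T) \<inter> dom (op_comp T H) \<and>
          (\<forall>f\<in>V. \<forall>n. app (op_comp H T) f n - app (op_comp T H) f n = - \<i> * f n))"

end

theory Submission
  imports Defs "HOL-Analysis.Analysis"
begin

text \<open>
  Write \<open>C h = h\<^sub>N L\<close> and \<open>B w = L\<^sup>* w\<^sub>N\<close> for the weighted shifts, so that
  \<open>L_h = i (\<Sum>k. B (1/h)^k / k - \<Sum>k. C h^k / k)\<close>. The shift \<open>B (cnj h)\<close> is the formal adjoint
  of \<open>C h\<close>, and \<open>1 / (1 / cnj g) = cnj g\<close>; hence \<open>L_g\<close> and \<open>L_(1/cnj g)\<close> are adjoint to each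
  other and their mean \<open>T\<close> is symmetric.

  With the partial products \<open>P h n = \<Prod>j<n. h j\<close> one has
  \<open>(B (1/h)^k f) n = P h (n - k) * f (n - k) / P h n\<close>. For finitely supported \<open>f\<close> the series in
  \<open>C h\<close> is finite and the \<open>n\<close>-th coordinate of the series in \<open>B (1/h)\<close> is \<open>O(1 / (n |P h n|))\<close>.
  The hypotheses give \<open>|P h n| \<ge> c n\<^sup>-\<^sup>d\<close> with \<open>d < 1/2\<close> for \<open>h = g\<close> and for \<open>h = 1 / cnj g\<close>,
  which makes these coordinates square summable; so finitely supported vectors lie in the domain
  of \<open>T\<close>, which is therefore dense.

  Finally \<open>[N, C h^k] = -k C h^k\<close> and \<open>[N, B w^k] = k B w^k\<close>, so
  \<open>[N, L_h] f = i (\<Sum>k\<ge>1. B (1/h)^k f + \<Sum>k\<ge>1. C h^k f) = i ((\<Sum>m. P h m * f m) / P h n - f n)\<close>.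
  On vectors supported in \<open>{0, 1, 2}\<close> whose moments \<open>\<Sum>m. P h m * f m\<close> vanish for both weights
  (a nonzero subspace: two equations in three unknowns) this gives \<open>[N, T] = -i\<close>; the vanishing
  moments also gain a factor \<open>1/n\<close>, which makes \<open>N T f\<close> square summable.
\<close>

section \<open>Square-summable sequences\<close>

definition finite_support :: "seq \<Rightarrow> bool" where
  "finite_support f \<longleftrightarrow> (\<exists>M. \<forall>m\<ge>M. f m = 0)"

lemma l2_zero [simp]: "(\<lambda>n. 0) \<in> l2"
  by (simp add: l2_def)

lemma l2_finite_support:
  assumes "finite_support f" shows "f \<in> l2"
proof -
  obtain M where "\<forall>m\<ge>M. f m = 0" using assms by (auto simp: finite_support_def)
  then have "summable (\<lambda>n. (cmod (f n))^2)"
    by (intro summable_finite[of "{..<M}"]) auto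
  then show ?thesis by (simp add: l2_def)
qed

lemma finite_support_diff:
  assumes "finite_support f" "finite_support g"
  shows "finite_support (\<lambda>n. f n - g n)"
proof -
  obtain M1 M2 where "\<forall>m\<ge>M1. f m = 0" "\<forall>m\<ge>M2. g m = 0"
    using assms by (auto simp: finite_support_def)
  then have "\<forall>m\<ge>max M1 M2. f m - g m = 0" by simp
  then show ?thesis unfolding finite_support_def by blast
qed

lemma l2_eventually_le:
  assumes "\<forall>\<^sub>F n in sequentially. cmod (f n) \<le> b n" and "summable (\<lambda>n. (b n)^2)"
  shows "f \<in> l2"
proof -
  have "\<forall>\<^sub>F n in sequentially. norm ((cmod (f n))^2) \<le> (b n)^2"
    using assms(1) by eventually_elim (simp add: power_mono)
  then have "summable (\<lambda>n. (cmod (f n))^2)"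
    using assms(2) by (rule summable_comparison_test_ev)
  then show ?thesis by (simp add: l2_def)
qed

lemma l2_add: assumes "f \<in> l2" "g \<in> l2" shows "(\<lambda>n. f n + g n) \<in> l2"
proof -
  have b: "norm ((cmod (f n + g n))^2) \<le> 2 * (cmod (f n))^2 + 2 * (cmod (g n))^2" for n
  proof -
    have "(cmod (f n + g n))^2 \<le> (cmod (f n) + cmod (g n))^2"
      by (rule power_mono[OF norm_triangle_ineq]) simp
    also have "\<dots> \<le> 2 * (cmod (f n))^2 + 2 * (cmod (g n))^2"
      using sum_squares_bound[of "cmod (f n)" "cmod (g n)"] by (simp add: power2_sum)
    finally show ?thesis by simp
  qed
  have s: "summable (\<lambda>n. 2 * (cmod (f n))^2 + 2 * (cmod (g n))^2)"
    using assms by (intro summable_add summable_mult) (auto simp: l2_def)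
  have "summable (\<lambda>n. (cmod (f n + g n))^2)"
    by (rule summable_comparison_test[OF _ s]) (use b in blast)
  then show ?thesis by (simp add: l2_def)
qed

lemma l2_scale: assumes "f \<in> l2" shows "(\<lambda>n. c * f n) \<in> l2"
proof -
  have "summable (\<lambda>n. (cmod c)^2 * (cmod (f n))^2)"
    using assms by (intro summable_mult) (auto simp: l2_def)
  then show ?thesis by (simp add: l2_def norm_mult power_mult_distrib)
qed

lemma l2_diff: assumes "f \<in> l2" "g \<in> l2" shows "(\<lambda>n. f n - g n) \<in> l2"
  using l2_add[OF assms(1) l2_scale[OF assms(2), of "-1"]] by simp

lemma l2_sum: "(\<And>k. k \<in> A \<Longrightarrow> F k \<in> l2) \<Longrightarrow> (\<lambda>n. \<Sum>k\<in>A. F k n) \<in> l2"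
  by (induction A rule: infinite_finite_induct) (simp_all add: l2_add)

lemma l2_shift: "f \<in> l2 \<Longrightarrow> (\<lambda>n. f (Suc n)) \<in> l2"
  unfolding l2_def using summable_Suc_iff[of "\<lambda>n. (cmod (f n))^2"] by simp

lemma l2norm_nonneg: "f \<in> l2 \<Longrightarrow> 0 \<le> l2norm f"
  unfolding l2norm_def l2_def by (simp add: suminf_nonneg)

lemma norm_le_l2norm: assumes "f \<in> l2" shows "cmod (f n) \<le> l2norm f"
proof -
  have "(\<Sum>i\<in>{n}. (cmod (f i))^2) \<le> (\<Sum>i. (cmod (f i))^2)"
    using assms by (intro sum_le_suminf) (auto simp: l2_def)
  then have "sqrt ((cmod (f n))^2) \<le> l2norm f"
    unfolding l2norm_def by (intro real_sqrt_le_mono) simp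
  then show ?thesis by simp
qed

lemma finite_support_dense:
  assumes "f \<in> l2" "e > 0"
  shows "\<exists>t. finite_support t \<and> l2norm (\<lambda>n. f n - t n) < e"
proof -
  define F where "F = (\<lambda>n. (cmod (f n))^2)"
  have F: "summable F" using assms(1) by (simp add: l2_def F_def)
  obtain N where N: "norm (\<Sum>n. F (n + N)) < e^2"
    using suminf_exist_split[OF _ F, of "e^2"] assms(2) by auto
  define t where "t n = (if n < N then f n else 0)" for n
  define G where "G n = (if n < N then 0 else F n)" for n
  have G: "summable G" by (rule summable_comparison_test[OF _ F]) (simp add: G_def F_def)
  have "l2norm (\<lambda>n. f n - t n) = sqrt (suminf G)"
    unfolding l2norm_def by (rule arg_cong[where f = sqrt], rule suminf_cong) (simp add: G_def F_def t_def)
  also have "suminf G = (\<Sum>n. F (n + N))"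
    using suminf_split_initial_segment[OF G, of N] by (simp add: G_def)
  also have "sqrt (\<Sum>n. F (n + N)) < sqrt (e^2)" using N by (intro real_sqrt_less_mono) simp
  finally have "l2norm (\<lambda>n. f n - t n) < e" using assms(2) by simp
  moreover have "finite_support t" unfolding finite_support_def t_def by (intro exI[of _ N]) auto
  ultimately show ?thesis by blast
qed

lemma l2_product_summable:
  assumes "f \<in> l2" "g \<in> l2"
  shows "summable (\<lambda>n. cmod (f n) * cmod (g n))"
proof -
  have b: "norm (cmod (f n) * cmod (g n)) \<le> (cmod (f n))^2 + (cmod (g n))^2" for n
  proof -
    have "norm (cmod (f n) * cmod (g n)) = cmod (f n) * cmod (g n)" by simp
    moreover have "0 \<le> cmod (f n) * cmod (g n)" by simp
    ultimately show ?thesis using sum_squares_bound[of "cmod (f n)" "cmod (g n)"] by linarith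
  qed
  have s: "summable (\<lambda>n. (cmod (f n))^2 + (cmod (g n))^2)"
    using assms by (intro summable_add) (auto simp: l2_def)
  show ?thesis by (rule summable_comparison_test[OF _ s]) (use b in blast)
qed

lemma l2inner_summable: "f \<in> l2 \<Longrightarrow> g \<in> l2 \<Longrightarrow> summable (\<lambda>n. cnj (f n) * g n)"
  by (rule summable_norm_cancel) (simp add: norm_mult l2_product_summable)

lemma l2inner_add_left:
  "a \<in> l2 \<Longrightarrow> b \<in> l2 \<Longrightarrow> u \<in> l2 \<Longrightarrow> l2inner (\<lambda>n. a n + b n) u = l2inner a u + l2inner b u"
  unfolding l2inner_def by (simp add: distrib_right suminf_add l2inner_summable)

lemma l2inner_add_right:
  "a \<in> l2 \<Longrightarrow> b \<in> l2 \<Longrightarrow> u \<in> l2 \<Longrightarrow> l2inner u (\<lambda>n. a n + b n) = l2inner u a + l2inner u b"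
  unfolding l2inner_def by (simp add: distrib_left suminf_add l2inner_summable)

lemma l2inner_diff_left:
  "a \<in> l2 \<Longrightarrow> b \<in> l2 \<Longrightarrow> u \<in> l2 \<Longrightarrow> l2inner (\<lambda>n. a n - b n) u = l2inner a u - l2inner b u"
  unfolding l2inner_def by (simp add: left_diff_distrib suminf_diff l2inner_summable)

lemma l2inner_diff_right:
  "a \<in> l2 \<Longrightarrow> b \<in> l2 \<Longrightarrow> u \<in> l2 \<Longrightarrow> l2inner u (\<lambda>n. a n - b n) = l2inner u a - l2inner u b"
  unfolding l2inner_def by (simp add: right_diff_distrib suminf_diff l2inner_summable)

lemma l2inner_scale_left: "a \<in> l2 \<Longrightarrow> u \<in> l2 \<Longrightarrow> l2inner (\<lambda>n. c * a n) u = cnj c * l2inner a u"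
  unfolding l2inner_def by (simp add: mult.assoc suminf_mult l2inner_summable)

lemma l2inner_scale_right: "a \<in> l2 \<Longrightarrow> u \<in> l2 \<Longrightarrow> l2inner u (\<lambda>n. c * a n) = c * l2inner u a"
  unfolding l2inner_def by (simp add: mult.left_commute suminf_mult l2inner_summable)

lemma l2inner_sum_left:
  assumes "finite A" "\<And>k. k \<in> A \<Longrightarrow> F k \<in> l2" "u \<in> l2"
  shows "l2inner (\<lambda>n. \<Sum>k\<in>A. F k n) u = (\<Sum>k\<in>A. l2inner (F k) u)"
  using assms
proof (induction A rule: finite_induct)
  case empty then show ?case by (simp add: l2inner_def)
next
  case (insert x A)
  then have "l2inner (\<lambda>n. F x n + (\<Sum>k\<in>A. F k n)) u = l2inner (F x) u + (\<Sum>k\<in>A. l2inner (F k) u)"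
    by (subst l2inner_add_left) (auto intro: l2_sum)
  with insert show ?case by simp
qed

lemma l2inner_sum_right:
  assumes "finite A" "\<And>k. k \<in> A \<Longrightarrow> F k \<in> l2" "u \<in> l2"
  shows "l2inner u (\<lambda>n. \<Sum>k\<in>A. F k n) = (\<Sum>k\<in>A. l2inner u (F k))"
  using assms
proof (induction A rule: finite_induct)
  case empty then show ?case by (simp add: l2inner_def)
next
  case (insert x A)
  then have "l2inner u (\<lambda>n. F x n + (\<Sum>k\<in>A. F k n)) = l2inner u (F x) + (\<Sum>k\<in>A. l2inner u (F k))"
    by (subst l2inner_add_right) (auto intro: l2_sum)
  with insert show ?case by simp
qed

lemma l2inner_cnj: "f \<in> l2 \<Longrightarrow> u \<in> l2 \<Longrightarrow> l2inner u f = cnj (l2inner f u)"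
proof -
  assume "f \<in> l2" "u \<in> l2"
  then have "(\<lambda>n. cnj (cnj (f n) * u n)) sums cnj (\<Sum>n. cnj (f n) * u n)"
    by (intro sums_cnj[THEN iffD2] summable_sums l2inner_summable)
  then show ?thesis unfolding l2inner_def by (simp add: sums_unique[symmetric] mult.commute)
qed

lemma l2inner_norm_le:
  assumes "f \<in> l2" "u \<in> l2"
  shows "cmod (l2inner f u) \<le> l2norm f * l2norm u"
proof -
  have s: "summable (\<lambda>n. cmod (f n) * cmod (u n))" by (rule l2_product_summable[OF assms])
  have "cmod (l2inner f u) \<le> (\<Sum>n. cmod (f n) * cmod (u n))"
    unfolding l2inner_def using summable_norm[of "\<lambda>n. cnj (f n) * u n"] s
    by (simp add: norm_mult)
  also have "\<dots> \<le> l2norm f * l2norm u"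
  proof (rule suminf_le_const[OF s])
    fix N
    have sq: "L2_set (\<lambda>n. cmod (v n)) {..<N} \<le> l2norm v" if "v \<in> l2" for v
      using that unfolding L2_set_def l2norm_def l2_def
      by (intro real_sqrt_le_mono sum_le_suminf) auto
    have "(\<Sum>n<N. cmod (f n) * cmod (u n))
        \<le> L2_set (\<lambda>n. cmod (f n)) {..<N} * L2_set (\<lambda>n. cmod (u n)) {..<N}"
      using L2_set_mult_ineq[of "\<lambda>n. cmod (f n)" "\<lambda>n. cmod (u n)" "{..<N}"] by simp
    also have "\<dots> \<le> l2norm f * l2norm u"
      by (intro mult_mono sq assms l2norm_nonneg L2_set_nonneg)
    finally show "(\<Sum>n<N. cmod (f n) * cmod (u n)) \<le> l2norm f * l2norm u" .
  qed
  finally show ?thesis .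
qed

lemma l2_lim_pointwise:
  assumes "\<And>K. S K \<in> l2" "l2_lim S x"
  shows "(\<lambda>K. S K n) \<longlonglongrightarrow> x n"
proof -
  have x: "x \<in> l2" and t: "(\<lambda>K. l2norm (\<lambda>n. S K n - x n)) \<longlonglongrightarrow> 0"
    using assms(2) by (auto simp: l2_lim_def)
  have b: "norm (S K n - x n) \<le> l2norm (\<lambda>n. S K n - x n)" for K
    using norm_le_l2norm[OF l2_diff[OF assms(1) x]] by simp
  have "(\<lambda>K. S K n - x n) \<longlonglongrightarrow> 0"
    by (rule tendsto_norm_zero_cancel, rule tendsto_sandwich[OF _ _ tendsto_const t]) (use b in auto)
  then show ?thesis by (simp add: LIM_zero_cancel)
qed

lemma l2_lim_the:
  assumes "\<And>K. S K \<in> l2" "l2_lim S x"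
  shows "(THE x. l2_lim S x) = x"
proof (rule the_equality[where P = "l2_lim S", OF assms(2)])
  fix y assume y: "l2_lim S y"
  show "y = x"
  proof
    fix n
    show "y n = x n"
      using l2_lim_pointwise[OF assms(1) y] l2_lim_pointwise[OF assms] by (rule LIMSEQ_unique)
  qed
qed

lemma l2_lim_eventually_const:
  assumes "\<And>K. K \<ge> M \<Longrightarrow> S K = S M" "S M \<in> l2"
  shows "l2_lim S (S M)"
proof -
  have "\<forall>\<^sub>F K in sequentially. l2norm (\<lambda>n. S K n - S M n) = 0"
  proof (rule eventually_mono[OF eventually_ge_at_top[of M]])
    fix K assume "M \<le> K"
    from assms(1)[OF this] show "l2norm (\<lambda>n. S K n - S M n) = 0" by (simp add: l2norm_def)
  qed
  then have "(\<lambda>K. l2norm (\<lambda>n. S K n - S M n)) \<longlonglongrightarrow> 0" by (rule tendsto_eventually)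
  then show ?thesis using assms(2) by (simp add: l2_lim_def)
qed

lemma suminf_tail_tendsto_zero:
  fixes f :: "nat \<Rightarrow> real"
  assumes "summable f"
  shows "(\<lambda>K. \<Sum>n. f (n + K)) \<longlonglongrightarrow> 0"
proof (rule LIMSEQ_I)
  fix r :: real assume "0 < r"
  then show "\<exists>N. \<forall>K\<ge>N. norm ((\<Sum>n. f (n + K)) - 0) < r"
    using suminf_exist_split[OF _ assms] by simp
qed

lemma l2_lim_tail_le:
  assumes x: "x \<in> l2" and b: "summable (\<lambda>n. (b n)^2)"
    and le: "\<And>K n. K \<ge> N \<Longrightarrow> cmod (S K n - x n) \<le> (if K < n then b n else 0)"
  shows "l2_lim S x"
proof -
  define tail where "tail K n = (if K < n then (b n)^2 else 0)" for K n
  have tail: "summable (tail K)" for K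
    by (rule summable_comparison_test[OF _ b]) (simp add: tail_def)
  have "suminf (tail K) = (\<Sum>i. (b (i + Suc K))^2)" for K
    using suminf_split_initial_segment[OF tail[of K], of "Suc K"] by (simp add: tail_def)
  then have "(\<lambda>K. suminf (tail K)) \<longlonglongrightarrow> 0"
    using LIMSEQ_Suc[OF suminf_tail_tendsto_zero[OF b]] by simp
  then have tail_lim: "(\<lambda>K. sqrt (suminf (tail K))) \<longlonglongrightarrow> 0"
    using tendsto_real_sqrt by fastforce
  have norm_le: "0 \<le> l2norm (\<lambda>n. S K n - x n) \<and> l2norm (\<lambda>n. S K n - x n) \<le> sqrt (suminf (tail K))"
    if "K \<ge> N" for K
  proof -
    have le: "(cmod (S K n - x n))^2 \<le> tail K n" for n
      using power_mono[OF le[OF that, of n] norm_ge_zero, of 2] by (auto simp: tail_def split: if_splits)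
    have "summable (\<lambda>n. (cmod (S K n - x n))^2)"
      by (rule summable_comparison_test[OF _ tail[of K]]) (simp add: le)
    then show ?thesis unfolding l2norm_def
      by (auto intro!: real_sqrt_le_mono suminf_le le tail suminf_nonneg)
  qed
  have "(\<lambda>K. l2norm (\<lambda>n. S K n - x n)) \<longlonglongrightarrow> 0"
  proof (rule tendsto_sandwich[OF _ _ tendsto_const tail_lim])
    show "\<forall>\<^sub>F K in sequentially. 0 \<le> l2norm (\<lambda>n. S K n - x n)"
      using eventually_ge_at_top[of N] by (rule eventually_mono) (use norm_le in blast)
    show "\<forall>\<^sub>F K in sequentially. l2norm (\<lambda>n. S K n - x n) \<le> sqrt (suminf (tail K))"
      using eventually_ge_at_top[of N] by (rule eventually_mono) (use norm_le in blast)
  qed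
  then show ?thesis using x by (simp add: l2_lim_def)
qed

lemma l2_lim_triangular:
  fixes t :: "nat \<Rightarrow> nat \<Rightarrow> complex"
  assumes upper: "\<And>k n. n < k \<Longrightarrow> t k n = 0"
    and bound: "\<forall>\<^sub>F n in sequentially. (\<Sum>k=1..n. cmod (t k n)) \<le> b n"
    and b: "summable (\<lambda>n. (b n)^2)"
  shows "l2_lim (\<lambda>K n. \<Sum>k=1..K. t k n) (\<lambda>n. \<Sum>k=1..n. t k n)"
proof -
  obtain N where N: "\<And>n. n \<ge> N \<Longrightarrow> (\<Sum>k=1..n. cmod (t k n)) \<le> b n"
    using bound by (auto simp: eventually_sequentially)
  have "cmod (\<Sum>k=1..n. t k n) \<le> b n" if "n \<ge> N" for n
    by (rule order_trans[OF norm_sum N[OF that]])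
  then have x: "(\<lambda>n. \<Sum>k=1..n. t k n) \<in> l2"
    by (intro l2_eventually_le[OF _ b] eventually_mono[OF eventually_ge_at_top[of N]])
  have le: "cmod ((\<Sum>k=1..K. t k n) - (\<Sum>k=1..n. t k n)) \<le> (if K < n then b n else 0)"
    if K: "K \<ge> N" for K n
  proof (cases "K < n")
    case False
    then have "(\<Sum>k=1..K. t k n) = (\<Sum>k=1..n. t k n)"
      by (intro sum.mono_neutral_right) (auto simp: upper)
    then show ?thesis using False by simp
  next
    case True
    have "(\<Sum>k=1..n. t k n) = (\<Sum>k=1..K. t k n) + (\<Sum>k\<in>{Suc K..n}. t k n)"
      using True by (subst sum.union_disjoint[symmetric]) (auto intro: sum.cong)
    then have "cmod ((\<Sum>k=1..K. t k n) - (\<Sum>k=1..n. t k n)) = cmod (\<Sum>k\<in>{Suc K..n}. t k n)"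
      by (simp add: norm_minus_commute)
    also have "\<dots> \<le> (\<Sum>k\<in>{Suc K..n}. cmod (t k n))" by (rule norm_sum)
    also have "\<dots> \<le> (\<Sum>k=1..n. cmod (t k n))" by (rule sum_mono2) auto
    also have "\<dots> \<le> b n" using N True K by simp
    finally show ?thesis using True by simp
  qed
  show ?thesis by (rule l2_lim_tail_le[OF x b le])
qed

lemma l2inner_tendsto_left:
  assumes "\<And>K. S K \<in> l2" "l2_lim S x" "u \<in> l2"
  shows "(\<lambda>K. l2inner (S K) u) \<longlonglongrightarrow> l2inner x u"
proof -
  have x: "x \<in> l2" and t: "(\<lambda>K. l2norm (\<lambda>n. S K n - x n)) \<longlonglongrightarrow> 0"
    using assms(2) by (auto simp: l2_lim_def)
  have b: "norm (l2inner (S K) u - l2inner x u) \<le> l2norm (\<lambda>n. S K n - x n) * l2norm u" for K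
    using l2inner_norm_le[OF l2_diff[OF assms(1) x] assms(3)]
    by (simp add: l2inner_diff_left assms x)
  have t': "(\<lambda>K. l2norm (\<lambda>n. S K n - x n) * l2norm u) \<longlonglongrightarrow> 0"
    using tendsto_mult[OF t tendsto_const[of "l2norm u"]] by simp
  have "(\<lambda>K. l2inner (S K) u - l2inner x u) \<longlonglongrightarrow> 0"
    by (rule tendsto_norm_zero_cancel, rule tendsto_sandwich[OF _ _ tendsto_const t']) (use b in auto)
  then show ?thesis by (simp add: LIM_zero_cancel)
qed

lemma l2inner_tendsto_right:
  assumes "\<And>K. S K \<in> l2" "l2_lim S x" "u \<in> l2"
  shows "(\<lambda>K. l2inner u (S K)) \<longlonglongrightarrow> l2inner u x"
proof -
  have "x \<in> l2" using assms(2) by (auto simp: l2_lim_def)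
  moreover have "(\<lambda>K. cnj (l2inner (S K) u)) \<longlonglongrightarrow> cnj (l2inner x u)"
    by (intro tendsto_cnj l2inner_tendsto_left[OF assms])
  ultimately show ?thesis
    using l2inner_cnj[OF assms(1) assms(3)] l2inner_cnj[of x u] assms(3) by simp
qed

section \<open>The operators in the logarithms\<close>

text \<open>\<open>wshiftL h\<close> is \<open>h\<^sub>N L\<close> and \<open>wshiftR w\<close> is \<open>L\<^sup>* w\<^sub>N\<close>.\<close>

definition wshiftL :: "(nat \<Rightarrow> complex) \<Rightarrow> seq \<Rightarrow> seq" where
  "wshiftL h f = (\<lambda>n. h n * f (Suc n))"

definition wshiftR :: "(nat \<Rightarrow> complex) \<Rightarrow> seq \<Rightarrow> seq" where
  "wshiftR w f = (\<lambda>n. if n = 0 then 0 else w (n - 1) * f (n - 1))"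

definition one_minus_hL :: "(nat \<Rightarrow> complex) \<Rightarrow> op" where
  "one_minus_hL h = op_diff op_id (op_comp (mult_op h) lshift)"

definition one_minus_Lhinv :: "(nat \<Rightarrow> complex) \<Rightarrow> op" where
  "one_minus_Lhinv h = op_diff op_id (op_comp rshift (mult_op (\<lambda>n. 1 / h n)))"

definition log_lim :: "op \<Rightarrow> seq \<Rightarrow> seq" where
  "log_lim A f = (THE x. l2_lim (log_partial A f) x)"

lemma dom_L_op: "dom (L_op h) = log_dom (one_minus_hL h) \<inter> log_dom (one_minus_Lhinv h)"
  by (simp add: L_op_def one_minus_hL_def one_minus_Lhinv_def op_scale_def op_diff_def
      op_log_def dom_def)

lemma app_L_op:
  "app (L_op h) f = (\<lambda>n. \<i> * (log_lim (one_minus_Lhinv h) f n - log_lim (one_minus_hL h) f n))"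
  by (simp add: L_op_def one_minus_hL_def one_minus_Lhinv_def op_scale_def op_diff_def
      op_log_def app_def log_lim_def algebra_simps)

lemma wshiftL_diff: "wshiftL h (\<lambda>n. f n - g n) = (\<lambda>n. wshiftL h f n - wshiftL h g n)"
  by (simp add: wshiftL_def right_diff_distrib)

lemma wshiftR_diff: "wshiftR w (\<lambda>n. f n - g n) = (\<lambda>n. wshiftR w f n - wshiftR w g n)"
  by (auto simp: wshiftR_def right_diff_distrib)

lemma wshiftR_0 [simp]: "wshiftR w f 0 = 0"
  and wshiftR_Suc [simp]: "wshiftR w f (Suc n) = w n * f n"
  by (simp_all add: wshiftR_def)

lemma finite_support_wshiftL: "finite_support f \<Longrightarrow> finite_support (wshiftL h f)"
  unfolding finite_support_def wshiftL_def by (auto intro: le_SucI)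

lemma finite_support_wshiftR:
  assumes "finite_support f" shows "finite_support (wshiftR w f)"
proof -
  obtain M where "\<forall>m\<ge>M. f m = 0" using assms by (auto simp: finite_support_def)
  then have "\<forall>m\<ge>Suc M. wshiftR w f m = 0" by (auto simp: wshiftR_def)
  then show ?thesis unfolding finite_support_def by blast
qed

lemma l2_wshiftR_iff: "wshiftR w f \<in> l2 \<longleftrightarrow> (\<lambda>n. w n * f n) \<in> l2"
  unfolding l2_def using summable_Suc_iff[of "\<lambda>n. (cmod (wshiftR w f n))^2"]
  by (simp add: wshiftR_def)

lemma app_one_minus_hL: "app (one_minus_hL h) f = (\<lambda>n. f n - wshiftL h f n)"
  by (simp add: one_minus_hL_def op_diff_def app_def op_id_def op_comp_def mult_op_def
      lshift_def wshiftL_def)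

lemma dom_one_minus_hL: "dom (one_minus_hL h) = {f \<in> l2. wshiftL h f \<in> l2}"
  by (auto simp: one_minus_hL_def op_diff_def dom_def app_def op_id_def op_comp_def mult_op_def
      lshift_def wshiftL_def l2_shift)

lemma app_one_minus_Lhinv: "app (one_minus_Lhinv h) f = (\<lambda>n. f n - wshiftR (\<lambda>j. 1 / h j) f n)"
  by (auto simp: one_minus_Lhinv_def op_diff_def app_def op_id_def op_comp_def mult_op_def
      rshift_def wshiftR_def)

lemma dom_one_minus_Lhinv: "dom (one_minus_Lhinv h) = {f \<in> l2. wshiftR (\<lambda>j. 1 / h j) f \<in> l2}"
  by (auto simp: one_minus_Lhinv_def op_diff_def dom_def app_def op_id_def op_comp_def
      mult_op_def rshift_def l2_wshiftR_iff)

lemma wshiftL_funpow: "(wshiftL h ^^ k) f n = (\<Prod>j\<in>{n..<n+k}. h j) * f (n + k)"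
proof (induction k arbitrary: f)
  case (Suc k)
  have "(wshiftL h ^^ Suc k) f n = (wshiftL h ^^ k) (wshiftL h f) n"
    by (simp add: funpow_Suc_right del: funpow.simps)
  also have "\<dots> = (\<Prod>j\<in>{n..<Suc (n+k)}. h j) * f (Suc (n + k))"
    by (simp add: Suc wshiftL_def prod.atLeastLessThan_Suc mult.assoc)
  finally show ?case by simp
qed simp

lemma wshiftR_funpow:
  "(wshiftR w ^^ k) f n = (if k \<le> n then (\<Prod>j\<in>{n-k..<n}. w j) * f (n - k) else 0)"
proof (induction k arbitrary: n)
  case (Suc k)
  show ?case
  proof (cases "Suc k \<le> n")
    case True
    obtain m where "n = Suc (m + k)" using True by (intro that[of "n - Suc k"]) auto
    then show ?thesis by (simp add: Suc prod.atLeastLessThan_Suc mult_ac)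
  next
    case False
    then show ?thesis by (cases n) (simp_all add: Suc)
  qed
qed simp

lemma dom_op_comp: "dom (op_comp A B) = {f \<in> dom B. app B f \<in> dom A}"
  by (simp add: op_comp_def dom_def)

lemma app_op_comp: "app (op_comp A B) f = app A (app B f)"
  by (simp add: op_comp_def app_def)

lemma app_op_pow: "app (op_pow A k) = app A ^^ k"
  by (induction k) (auto simp: op_id_def app_def op_comp_def)

lemma dom_op_pow: "f \<in> dom (op_pow A k) \<longleftrightarrow> f \<in> l2 \<and> (\<forall>j<k. (app A ^^ j) f \<in> dom A)"
proof (induction k)
  case 0 then show ?case by (simp add: op_id_def dom_def)
next
  case (Suc k)
  have "f \<in> dom (op_pow A (Suc k)) \<longleftrightarrow> f \<in> dom (op_pow A k) \<and> (app A ^^ k) f \<in> dom A"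
    unfolding op_pow.simps op_comp_def dom_def by (simp add: app_op_pow)
  then show ?case using Suc by (auto simp: less_Suc_eq)
qed

text \<open>The iterates of \<open>1 - C\<close> lie in \<open>l2\<close>; since \<open>C\<close> maps \<open>(1 - C)\<^sup>j f\<close> to the difference
  of two consecutive iterates, induction on \<open>k\<close> over all \<open>j\<close> at once gives \<open>C\<^sup>k (1 - C)\<^sup>j f \<in> l2\<close>.\<close>

lemma funpow_l2_of_iterates:
  fixes C :: "seq \<Rightarrow> seq"
  assumes C_diff: "\<And>f g. C (\<lambda>n. f n - g n) = (\<lambda>n. C f n - C g n)"
    and iter: "\<And>j. ((\<lambda>f n. f n - C f n) ^^ j) f \<in> l2"
  shows "(C ^^ k) f \<in> l2"
proof -
  define D where "D = (\<lambda>f n. f n - C f n :: complex)"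
  have funpow_diff: "(C ^^ k) (\<lambda>n. a n - b n) = (\<lambda>n. (C ^^ k) a n - (C ^^ k) b n)" for k a b
    by (induction k) (simp_all add: C_diff)
  have C_iter: "C ((D ^^ j) f) = (\<lambda>n. (D ^^ j) f n - (D ^^ Suc j) f n)" for j
    by (simp add: D_def)
  have "\<forall>j. (C ^^ k) ((D ^^ j) f) \<in> l2"
  proof (induction k)
    case 0 then show ?case using iter by (simp add: D_def)
  next
    case (Suc k)
    have eq: "(C ^^ Suc k) ((D ^^ j) f) = (\<lambda>n. (C ^^ k) ((D ^^ j) f) n - (C ^^ k) ((D ^^ Suc j) f) n)"
      for j by (simp only: funpow_Suc_right comp_apply C_iter funpow_diff)
    show ?case
    proof
      fix j show "(C ^^ Suc k) ((D ^^ j) f) \<in> l2"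
        unfolding eq by (rule l2_diff) (use Suc.IH in blast)+
    qed
  qed
  from this[rule_format, of 0] show ?thesis by simp
qed

locale id_minus_op =
  fixes A :: op and C :: "seq \<Rightarrow> seq"
  assumes C_diff: "\<And>f g. C (\<lambda>n. f n - g n) = (\<lambda>n. C f n - C g n)"
    and finite_support_C: "\<And>f. finite_support f \<Longrightarrow> finite_support (C f)"
    and dom_eq: "dom A = {f \<in> l2. C f \<in> l2}"
    and app_eq: "\<And>f. app A f = (\<lambda>n. f n - C f n)"
begin

lemma app_A: "app A = (\<lambda>f n. f n - C f n)"
  using app_eq by blast

lemma log_partial_eq: "log_partial A f = (\<lambda>K n. \<Sum>k=1..K. 1 / of_nat k * (C ^^ k) f n)"
proof -
  have C: "app (op_diff op_id A) = C"
    by (auto simp: op_diff_def app_def op_id_def app_eq[unfolded app_def])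
  show ?thesis by (intro ext) (simp only: log_partial_def app_op_pow C)
qed

lemma funpow_l2:
  assumes "\<forall>k. f \<in> dom (op_pow A k)"
  shows "(C ^^ k) f \<in> l2"
proof (rule funpow_l2_of_iterates[OF C_diff])
  fix j
  have "(app A ^^ j) f \<in> dom A" using assms dom_op_pow[of f A "Suc j"] by blast
  then show "((\<lambda>f n. f n - C f n) ^^ j) f \<in> l2"
    by (simp add: dom_eq app_A)
qed

lemma log_partial_l2: "\<forall>k. f \<in> dom (op_pow A k) \<Longrightarrow> log_partial A f K \<in> l2"
  unfolding log_partial_eq by (intro l2_sum l2_scale funpow_l2)

lemma log_dom_funpow_l2: "f \<in> log_dom A \<Longrightarrow> (C ^^ k) f \<in> l2"
  by (rule funpow_l2) (simp add: log_dom_def)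

lemma l2_lim_log_lim:
  assumes "f \<in> log_dom A"
  shows "l2_lim (log_partial A f) (log_lim A f)"
proof -
  obtain x where x: "l2_lim (log_partial A f) x" using assms by (auto simp: log_dom_def)
  have "log_lim A f = x"
    unfolding log_lim_def using assms by (intro l2_lim_the x log_partial_l2) (simp add: log_dom_def)
  then show ?thesis using x by simp
qed

lemma l2_log_lim: "f \<in> log_dom A \<Longrightarrow> log_lim A f \<in> l2"
  using l2_lim_log_lim by (simp add: l2_lim_def)

lemma log_dom_l2: "f \<in> log_dom A \<Longrightarrow> f \<in> l2"
  by (auto simp: log_dom_def dom_op_pow)

lemma finite_support_funpow: "finite_support f \<Longrightarrow> finite_support ((C ^^ k) f)"
  by (induction k) (simp_all add: finite_support_C)

lemma finite_support_dom_op_pow: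
  assumes "finite_support f"
  shows "f \<in> dom (op_pow A k)"
proof -
  have "finite_support ((app A ^^ j) f)" for j
    by (induction j) (simp_all add: assms app_A finite_support_C finite_support_diff)
  then show ?thesis
    unfolding dom_op_pow dom_eq using assms by (auto simp: l2_finite_support finite_support_C)
qed

lemma log_dom_log_limI:
  assumes "finite_support f" "l2_lim (\<lambda>K n. \<Sum>k=1..K. 1 / of_nat k * (C ^^ k) f n) x"
  shows "f \<in> log_dom A" and "log_lim A f = x"
proof -
  have pow: "\<forall>k. f \<in> dom (op_pow A k)" using finite_support_dom_op_pow[OF assms(1)] by blast
  then show "f \<in> log_dom A" using assms(2) unfolding log_dom_def log_partial_eq by blast
  show "log_lim A f = x"
    unfolding log_lim_def using assms(2) by (intro l2_lim_the log_partial_l2[OF pow]) (simp add: log_partial_eq)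
qed

end

interpretation hL: id_minus_op "one_minus_hL h" "wshiftL h" for h
  by unfold_locales
    (simp_all add: wshiftL_diff finite_support_wshiftL dom_one_minus_hL app_one_minus_hL)

interpretation Lhinv: id_minus_op "one_minus_Lhinv h" "wshiftR (\<lambda>j. 1 / h j)" for h
  by unfold_locales
    (simp_all add: wshiftR_diff finite_support_wshiftR dom_one_minus_Lhinv app_one_minus_Lhinv)

section \<open>Partial products of the weight\<close>

definition partial_prod :: "(nat \<Rightarrow> complex) \<Rightarrow> nat \<Rightarrow> complex" where
  "partial_prod h n = (\<Prod>j<n. h j)"

definition slowly_decaying :: "(nat \<Rightarrow> complex) \<Rightarrow> bool" where
  "slowly_decaying h \<longleftrightarrow>
     (\<exists>c>0. \<exists>d<1/2. \<forall>\<^sub>F n in sequentially. c * real n powr (- d) \<le> cmod (partial_prod h n))"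

lemma partial_prod_split: "m \<le> n \<Longrightarrow> partial_prod h n = partial_prod h m * (\<Prod>j\<in>{m..<n}. h j)"
  unfolding partial_prod_def using prod.atLeastLessThan_concat[of 0 m n h]
  by (simp add: atLeast0LessThan)

lemma partial_prod_nonzero: "(\<And>j. h j \<noteq> 0) \<Longrightarrow> partial_prod h n \<noteq> 0"
  by (simp add: partial_prod_def)

lemma partial_prod_wshiftL_funpow:
  "partial_prod h n * (wshiftL h ^^ k) f n = partial_prod h (n + k) * f (n + k)"
  by (simp add: wshiftL_funpow partial_prod_split[of n "n + k"] mult.assoc)

lemma wshiftR_funpow_partial_prod:
  assumes "\<And>j. h j \<noteq> 0" "k \<le> n"
  shows "(wshiftR (\<lambda>j. 1 / h j) ^^ k) f n = partial_prod h (n - k) * f (n - k) / partial_prod h n"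
proof -
  have "partial_prod h n = partial_prod h (n - k) * (\<Prod>j\<in>{n-k..<n}. h j)"
    by (rule partial_prod_split) simp
  moreover have "(\<Prod>j\<in>{n-k..<n}. h j) \<noteq> 0" using assms(1) by simp
  ultimately show ?thesis
    using assms by (simp add: wshiftR_funpow prod_dividef partial_prod_nonzero field_simps)
qed

lemma sum_reflect:
  fixes a :: "nat \<Rightarrow> 'a::comm_monoid_add"
  shows "(\<Sum>k=1..n. a (n - k)) = (\<Sum>m<n. a m)"
proof -
  have "(\<Sum>k=1..n. a (n - k)) = (\<Sum>i<n. a (n - Suc i))" by (simp add: sum.atLeast1_atMost_eq)
  also have "\<dots> = (\<Sum>m<n. a m)" by (rule sum.nat_diff_reindex)
  finally show ?thesis .
qed

lemma wshiftR_log_sum: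
  assumes "\<And>j. h j \<noteq> 0" "\<forall>m\<ge>M. f m = 0" "M \<le> n"
  shows "(\<Sum>k=1..n. 1 / of_nat k * (wshiftR (\<lambda>j. 1 / h j) ^^ k) f n)
    = (\<Sum>m<M. partial_prod h m * f m / of_nat (n - m)) / partial_prod h n"
proof -
  have "(\<Sum>k=1..n. 1 / of_nat k * (wshiftR (\<lambda>j. 1 / h j) ^^ k) f n)
      = (\<Sum>k=1..n. partial_prod h (n - k) * f (n - k) / of_nat (n - (n - k)) / partial_prod h n)"
    by (intro sum.cong refl) (simp add: wshiftR_funpow_partial_prod assms(1))
  also have "\<dots> = (\<Sum>m<n. partial_prod h m * f m / of_nat (n - m) / partial_prod h n)"
    by (rule sum_reflect)
  also have "\<dots> = (\<Sum>m<M. partial_prod h m * f m / of_nat (n - m) / partial_prod h n)"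
    using assms(2,3) by (intro sum.mono_neutral_right) auto
  finally show ?thesis by (simp add: sum_divide_distrib)
qed

lemma wshiftR_log_sum_norm:
  assumes "\<And>j. h j \<noteq> 0" "\<forall>m\<ge>M. f m = 0" "M \<le> n"
  shows "(\<Sum>k=1..n. cmod (1 / of_nat k * (wshiftR (\<lambda>j. 1 / h j) ^^ k) f n))
    = (\<Sum>m<M. cmod (partial_prod h m * f m) / real (n - m)) / cmod (partial_prod h n)"
proof -
  have "(\<Sum>k=1..n. cmod (1 / of_nat k * (wshiftR (\<lambda>j. 1 / h j) ^^ k) f n))
      = (\<Sum>k=1..n. cmod (partial_prod h (n - k) * f (n - k)) / real (n - (n - k)) / cmod (partial_prod h n))"
    by (intro sum.cong refl) (simp add: wshiftR_funpow_partial_prod assms(1) norm_divide norm_mult)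
  also have "\<dots> = (\<Sum>m<n. cmod (partial_prod h m * f m) / real (n - m) / cmod (partial_prod h n))"
    by (rule sum_reflect)
  also have "\<dots> = (\<Sum>m<M. cmod (partial_prod h m * f m) / real (n - m) / cmod (partial_prod h n))"
    using assms(2,3) by (intro sum.mono_neutral_right) auto
  finally show ?thesis by (simp add: sum_divide_distrib)
qed

definition dual_weight :: "(nat \<Rightarrow> complex) \<Rightarrow> nat \<Rightarrow> complex" where
  "dual_weight h n = 1 / cnj (h n)"

lemma dual_weight_dual_weight [simp]: "dual_weight (dual_weight h) = h"
  by (simp add: dual_weight_def fun_eq_iff)

lemma dual_weight_nonzero: "(\<And>j. h j \<noteq> 0) \<Longrightarrow> dual_weight h j \<noteq> 0"
  by (simp add: dual_weight_def)

lemma inverse_dual_weight: "(\<lambda>n. 1 / dual_weight h n) = (\<lambda>n. cnj (h n))"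
  by (simp add: dual_weight_def)

lemma norm_partial_prod_Suc: "cmod (partial_prod g (Suc n)) = (\<Prod>k\<le>n. cmod (g k))"
  by (simp add: partial_prod_def prod_norm lessThan_Suc_atMost)

lemma slowly_decaying_if_prod_ge:
  assumes c: "c > 0" and d: "0 \<le> d" "d < 1/2"
    and lower: "\<forall>n>n0. c * real n powr (- d) \<le> (\<Prod>k\<le>n. cmod (g k))"
  shows "slowly_decaying g"
  unfolding slowly_decaying_def
proof (intro exI conjI)
  show "\<forall>\<^sub>F n in sequentially. c * real n powr (- d) \<le> cmod (partial_prod g n)"
  proof (rule eventually_mono[OF eventually_ge_at_top[of "n0 + 2"]])
    fix n assume n: "n0 + 2 \<le> n"
    obtain m where m: "n = Suc m" "m > n0" using n by (intro that[of "n - 1"]) auto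
    have "c * real n powr (- d) \<le> c * real m powr (- d)"
      using m c d by (intro mult_left_mono powr_mono2') auto
    also have "\<dots> \<le> cmod (partial_prod g n)" using lower m by (simp add: norm_partial_prod_Suc)
    finally show "c * real n powr (- d) \<le> cmod (partial_prod g n)" .
  qed
qed (use c d in auto)

lemma slowly_decaying_dual_if_prod_le:
  assumes nz: "\<And>j. g j \<noteq> 0" and c: "c > 0" and d: "0 \<le> d" "d < 1/2"
    and upper: "\<forall>n>n0. (\<Prod>k\<le>n. cmod (g k)) \<le> c * real n powr d"
  shows "slowly_decaying (dual_weight g)"
  unfolding slowly_decaying_def
proof (intro exI conjI)
  show "\<forall>\<^sub>F n in sequentially. 1 / c * real n powr (- d) \<le> cmod (partial_prod (dual_weight g) n)"
  proof (rule eventually_mono[OF eventually_ge_at_top[of "n0 + 2"]])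
    fix n assume n: "n0 + 2 \<le> n"
    obtain m where m: "n = Suc m" "m > n0" using n by (intro that[of "n - 1"]) auto
    have pos: "0 < cmod (partial_prod g n)" using partial_prod_nonzero[OF nz] by simp
    have "cmod (partial_prod g n) \<le> c * real m powr d" using upper m by (simp add: norm_partial_prod_Suc)
    also have "\<dots> \<le> c * real n powr d" using m c d by (intro mult_left_mono powr_mono2) auto
    finally have le: "cmod (partial_prod g n) \<le> c * real n powr d" .
    have cpos: "0 < c * real n powr d" using c m by simp
    have "1 / (c * real n powr d) \<le> 1 / cmod (partial_prod g n)"
      by (rule divide_left_mono[OF le]) (simp_all add: mult_pos_pos[OF cpos pos])
    moreover have "cmod (partial_prod (dual_weight g) n) = 1 / cmod (partial_prod g n)"
      by (simp add: partial_prod_def dual_weight_def prod_norm[symmetric] norm_divide prod_dividef)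
    ultimately show "1 / c * real n powr (- d) \<le> cmod (partial_prod (dual_weight g) n)"
      by (simp add: powr_minus divide_inverse)
  qed
qed (use c d in auto)

lemma summable_inverse_lower_bound:
  fixes p :: "nat \<Rightarrow> real"
  assumes c: "c > 0" and d: "d < 1/2"
    and N: "\<And>n. n \<ge> N \<Longrightarrow> c * real n powr (- d) \<le> p n"
  shows "summable (\<lambda>n. (K / (real n * p n))^2)"
proof -
  have majorant: "summable (\<lambda>n. (K / c)^2 * real n powr (2 * d - 2))"
    using d by (intro summable_mult) (simp add: summable_real_powr_iff)
  have bound: "norm ((K / (real n * p n))^2) \<le> (K / c)^2 * real n powr (2 * d - 2)"
    if n: "n \<ge> max N 1" for n
  proof -
    have pos: "0 < real n" using n by simp
    have "c * real n powr (1 - d) = real n * (c * real n powr (- d))"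
      using pos by (simp add: powr_diff powr_minus field_simps)
    also have "\<dots> \<le> real n * p n" using N n pos by (intro mult_left_mono) auto
    finally have le: "c * real n powr (1 - d) \<le> real n * p n" .
    have cpos: "0 < c * real n powr (1 - d)" using c pos by simp
    have "(K / (real n * p n))^2 = K^2 / (real n * p n)^2" by (simp add: power_divide)
    also have "\<dots> \<le> K^2 / (c * real n powr (1 - d))^2"
    proof (rule divide_left_mono)
      show "(c * real n powr (1 - d))^2 \<le> (real n * p n)^2" using le cpos by (intro power_mono) auto
      show "0 < (real n * p n)^2 * (c * real n powr (1 - d))^2"
      proof (rule mult_pos_pos)
        have "0 < real n * p n" using le cpos by linarith
        then show "0 < (real n * p n)^2" by (rule zero_less_power)
      qed (rule zero_less_power[OF cpos])
    qed simp
    also have "(c * real n powr (1 - d))^2 = c^2 * (1 / real n powr (2 * d - 2))"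
    proof -
      have "real n powr (1 - d) * real n powr (1 - d) = 1 / real n powr (2 * d - 2)"
        unfolding powr_add[symmetric] powr_minus_divide[symmetric]
        by (rule arg_cong[where f = "\<lambda>t. real n powr t"]) simp
      then show ?thesis by (simp only: power_mult_distrib power2_eq_square mult_ac)
    qed
    also have "K^2 / (c^2 * (1 / real n powr (2 * d - 2))) = (K / c)^2 * real n powr (2 * d - 2)"
      using pos c by (simp add: power_divide field_simps)
    finally show ?thesis by simp
  qed
  show ?thesis
    by (rule summable_comparison_test_ev[OF _ majorant])
      (rule eventually_mono[OF eventually_ge_at_top[of "max N 1"]], rule bound)
qed

lemma summable_inverse_partial_prod:
  assumes "slowly_decaying h"
  shows "summable (\<lambda>n. (K / (real n * cmod (partial_prod h n)))^2)"
proof -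
  obtain c d N where "c > 0" "d < 1/2"
    and "\<And>n. n \<ge> N \<Longrightarrow> c * real n powr (- d) \<le> cmod (partial_prod h n)"
    using assms by (auto simp: slowly_decaying_def eventually_sequentially)
  then show ?thesis by (rule summable_inverse_lower_bound)
qed

lemma hL_log_lim_finite_support:
  assumes "\<forall>m\<ge>M. f m = 0"
  shows "f \<in> log_dom (one_minus_hL h)"
    and "log_lim (one_minus_hL h) f = (\<lambda>n. \<Sum>k=1..M. 1 / of_nat k * (wshiftL h ^^ k) f n)"
proof -
  define S where "S K n = (\<Sum>k=1..K. 1 / of_nat k * (wshiftL h ^^ k) f n)" for K n
  have fs: "finite_support f" using assms by (auto simp: finite_support_def)
  have "S K = S M" if "K \<ge> M" for K
    unfolding S_def using that assms
    by (intro ext sum.mono_neutral_right) (auto simp: wshiftL_funpow)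
  moreover have "S M \<in> l2" unfolding S_def
    by (intro l2_sum l2_scale l2_finite_support) (simp add: fs hL.finite_support_funpow)
  ultimately have "l2_lim S (S M)" by (rule l2_lim_eventually_const)
  then have "l2_lim (\<lambda>K n. \<Sum>k=1..K. 1 / of_nat k * (wshiftL h ^^ k) f n) (S M)"
    by (simp add: S_def[abs_def])
  from hL.log_dom_log_limI[OF fs this]
  show "f \<in> log_dom (one_minus_hL h)"
    and "log_lim (one_minus_hL h) f = (\<lambda>n. \<Sum>k=1..M. 1 / of_nat k * (wshiftL h ^^ k) f n)"
    by (simp_all add: S_def[abs_def])
qed

lemma inverse_diff_le:
  assumes "2 * m \<le> n" "m < n"
  shows "1 / real (n - m) \<le> 2 / real n"
  using assms by (simp add: field_simps of_nat_diff)

lemma Lhinv_log_lim_finite_support: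
  assumes nz: "\<And>j. h j \<noteq> 0" and slow: "slowly_decaying h" and M: "\<forall>m\<ge>M. f m = 0"
  shows "f \<in> log_dom (one_minus_Lhinv h)"
    and "log_lim (one_minus_Lhinv h) f = (\<lambda>n. \<Sum>k=1..n. 1 / of_nat k * (wshiftR (\<lambda>j. 1 / h j) ^^ k) f n)"
proof -
  define S where "S = (\<Sum>m<M. cmod (partial_prod h m * f m))"
  have fs: "finite_support f" using M by (auto simp: finite_support_def)
  have bound: "(\<Sum>k=1..n. cmod (1 / of_nat k * (wshiftR (\<lambda>j. 1 / h j) ^^ k) f n))
      \<le> 2 * S / (real n * cmod (partial_prod h n))" if n: "n \<ge> max (2 * M) 1" for n
  proof -
    have "(\<Sum>m<M. cmod (partial_prod h m * f m) / real (n - m)) \<le> (\<Sum>m<M. cmod (partial_prod h m * f m) * (2 / real n))"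
      using n inverse_diff_le[of _ n] by (intro sum_mono) (auto simp: divide_inverse intro!: mult_left_mono)
    also have "\<dots> = S * (2 / real n)" by (simp only: S_def sum_distrib_right)
    finally have le: "(\<Sum>m<M. cmod (partial_prod h m * f m) / real (n - m)) \<le> S * (2 / real n)" .
    have "(\<Sum>k=1..n. cmod (1 / of_nat k * (wshiftR (\<lambda>j. 1 / h j) ^^ k) f n))
        = (\<Sum>m<M. cmod (partial_prod h m * f m) / real (n - m)) / cmod (partial_prod h n)"
      using n by (intro wshiftR_log_sum_norm[OF nz M]) simp
    also have "\<dots> \<le> S * (2 / real n) / cmod (partial_prod h n)"
      by (rule divide_right_mono[OF le]) simp
    finally show ?thesis by (simp add: mult.commute)
  qed
  have "l2_lim (\<lambda>K n. \<Sum>k=1..K. 1 / of_nat k * (wshiftR (\<lambda>j. 1 / h j) ^^ k) f n)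
      (\<lambda>n. \<Sum>k=1..n. 1 / of_nat k * (wshiftR (\<lambda>j. 1 / h j) ^^ k) f n)"
  proof (rule l2_lim_triangular)
    show "\<And>k n. n < k \<Longrightarrow> 1 / of_nat k * (wshiftR (\<lambda>j. 1 / h j) ^^ k) f n = 0"
      by (simp add: wshiftR_funpow)
    show "\<forall>\<^sub>F n in sequentially. (\<Sum>k=1..n. cmod (1 / of_nat k * (wshiftR (\<lambda>j. 1 / h j) ^^ k) f n))
        \<le> 2 * S / (real n * cmod (partial_prod h n))"
      by (rule eventually_mono[OF eventually_ge_at_top[of "max (2 * M) 1"]]) (rule bound)
    show "summable (\<lambda>n. (2 * S / (real n * cmod (partial_prod h n)))^2)"
      by (rule summable_inverse_partial_prod[OF slow])
  qed
  from Lhinv.log_dom_log_limI[OF fs this]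
  show "f \<in> log_dom (one_minus_Lhinv h)"
    and "log_lim (one_minus_Lhinv h) f = (\<lambda>n. \<Sum>k=1..n. 1 / of_nat k * (wshiftR (\<lambda>j. 1 / h j) ^^ k) f n)"
    by simp_all
qed

lemma finite_support_dom_L_op:
  assumes "\<And>j. h j \<noteq> 0" "slowly_decaying h" "finite_support f"
  shows "f \<in> dom (L_op h)"
  using assms hL_log_lim_finite_support(1) Lhinv_log_lim_finite_support(1)
  by (auto simp: dom_L_op finite_support_def)

lemma L_op_finite_support:
  assumes "\<And>j. h j \<noteq> 0" "slowly_decaying h" "\<forall>m\<ge>M. f m = 0"
  shows "app (L_op h) f = (\<lambda>n. \<i> * ((\<Sum>k=1..n. 1 / of_nat k * (wshiftR (\<lambda>j. 1 / h j) ^^ k) f n)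
    - (\<Sum>k=1..M. 1 / of_nat k * (wshiftL h ^^ k) f n)))"
  by (simp add: app_L_op hL_log_lim_finite_support(2)[OF assms(3)]
      Lhinv_log_lim_finite_support(2)[OF assms])

section \<open>Symmetry\<close>

lemma l2inner_wshiftL:
  assumes "a \<in> l2" "wshiftR (\<lambda>n. cnj (h n)) b \<in> l2"
  shows "l2inner (wshiftL h a) b = l2inner a (wshiftR (\<lambda>n. cnj (h n)) b)"
proof -
  define F where "F = (\<lambda>n. cnj (a n) * wshiftR (\<lambda>n. cnj (h n)) b n)"
  have "summable F" unfolding F_def by (rule l2inner_summable[OF assms])
  have "l2inner a (wshiftR (\<lambda>n. cnj (h n)) b) = suminf F" unfolding l2inner_def F_def ..
  also have "\<dots> = (\<Sum>n. F (Suc n))" using suminf_split_head[OF \<open>summable F\<close>] by (simp add: F_def)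
  also have "\<dots> = l2inner (wshiftL h a) b" by (simp add: l2inner_def F_def wshiftL_def mult_ac)
  finally show ?thesis ..
qed

lemma l2inner_wshiftL_funpow:
  assumes "\<And>j. (wshiftL h ^^ j) a \<in> l2" "\<And>j. (wshiftR (\<lambda>n. cnj (h n)) ^^ j) b \<in> l2"
  shows "l2inner ((wshiftL h ^^ k) a) b = l2inner a ((wshiftR (\<lambda>n. cnj (h n)) ^^ k) b)"
  using assms(2)
proof (induction k arbitrary: b)
  case (Suc k)
  have "l2inner ((wshiftL h ^^ Suc k) a) b = l2inner ((wshiftL h ^^ k) a) (wshiftR (\<lambda>n. cnj (h n)) b)"
    using assms(1)[of k] Suc.prems[of 1] by (simp add: l2inner_wshiftL)
  also have "\<dots> = l2inner a ((wshiftR (\<lambda>n. cnj (h n)) ^^ k) (wshiftR (\<lambda>n. cnj (h n)) b))"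
    using Suc.prems[of "Suc _"] by (intro Suc.IH) (simp add: funpow_Suc_right del: funpow.simps)
  finally show ?case by (simp add: funpow_Suc_right del: funpow.simps)
qed simp

lemma l2inner_log_lim:
  assumes f: "f \<in> log_dom (one_minus_hL h)" and u: "u \<in> log_dom (one_minus_Lhinv h')"
    and dual: "(\<lambda>n. 1 / h' n) = (\<lambda>n. cnj (h n))"
  shows "l2inner (log_lim (one_minus_hL h) f) u = l2inner f (log_lim (one_minus_Lhinv h') u)"
proof -
  note Cf = hL.log_dom_funpow_l2[OF f] and Bu = Lhinv.log_dom_funpow_l2[OF u, unfolded dual]
  have fl: "f \<in> l2" and ul: "u \<in> l2" using f u hL.log_dom_l2 Lhinv.log_dom_l2 by auto
  have partial: "l2inner (log_partial (one_minus_hL h) f K) u = l2inner f (log_partial (one_minus_Lhinv h') u K)" for K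
  proof -
    have "l2inner (log_partial (one_minus_hL h) f K) u
        = (\<Sum>k=1..K. l2inner (\<lambda>n. 1 / of_nat k * (wshiftL h ^^ k) f n) u)"
      unfolding hL.log_partial_eq by (rule l2inner_sum_left[OF finite_atLeastAtMost l2_scale[OF Cf] ul])
    also have "\<dots> = (\<Sum>k=1..K. cnj (1 / of_nat k) * l2inner ((wshiftL h ^^ k) f) u)"
      by (rule sum.cong[OF refl]) (rule l2inner_scale_left[OF Cf ul])
    also have "\<dots> = (\<Sum>k=1..K. 1 / of_nat k * l2inner f ((wshiftR (\<lambda>n. cnj (h n)) ^^ k) u))"
      using Cf Bu by (simp add: l2inner_wshiftL_funpow)
    also have "\<dots> = (\<Sum>k=1..K. l2inner f (\<lambda>n. 1 / of_nat k * (wshiftR (\<lambda>n. cnj (h n)) ^^ k) u n))"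
      by (rule sum.cong[OF refl]) (rule l2inner_scale_right[OF Bu fl, symmetric])
    also have "\<dots> = l2inner f (log_partial (one_minus_Lhinv h') u K)"
      unfolding Lhinv.log_partial_eq dual
      by (rule l2inner_sum_right[OF finite_atLeastAtMost l2_scale[OF Bu] fl, symmetric])
    finally show ?thesis .
  qed
  have "(\<lambda>K. l2inner (log_partial (one_minus_hL h) f K) u) \<longlonglongrightarrow> l2inner (log_lim (one_minus_hL h) f) u"
    using f ul by (intro l2inner_tendsto_left hL.l2_lim_log_lim hL.log_partial_l2) (auto simp: log_dom_def)
  moreover have "(\<lambda>K. l2inner f (log_partial (one_minus_Lhinv h') u K)) \<longlonglongrightarrow> l2inner f (log_lim (one_minus_Lhinv h') u)"
    using u fl by (intro l2inner_tendsto_right Lhinv.l2_lim_log_lim Lhinv.log_partial_l2) (auto simp: log_dom_def)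
  ultimately show ?thesis unfolding partial by (rule LIMSEQ_unique)
qed

lemma L_op_l2:
  assumes "f \<in> dom (L_op h)"
  shows "f \<in> l2" and "app (L_op h) f \<in> l2"
  using assms hL.log_dom_l2 by (auto simp: dom_L_op app_L_op intro!: l2_scale l2_diff
      hL.l2_log_lim Lhinv.l2_log_lim)

text \<open>Since \<open>1 / dual_weight h = cnj h\<close>, each logarithm in \<open>L_op h\<close> is adjoint to the opposite
  logarithm in \<open>L_op (dual_weight h)\<close>.\<close>

lemma l2inner_L_op:
  assumes f: "f \<in> dom (L_op h)" and u: "u \<in> dom (L_op (dual_weight h))"
  shows "l2inner (app (L_op h) f) u = l2inner f (app (L_op (dual_weight h)) u)"
proof -
  let ?Lf = "log_lim (one_minus_hL h) f" and ?Rf = "log_lim (one_minus_Lhinv h) f"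
  let ?Lu = "log_lim (one_minus_hL (dual_weight h)) u"
  let ?Ru = "log_lim (one_minus_Lhinv (dual_weight h)) u"
  have fd: "f \<in> log_dom (one_minus_hL h)" "f \<in> log_dom (one_minus_Lhinv h)"
    and ud: "u \<in> log_dom (one_minus_hL (dual_weight h))" "u \<in> log_dom (one_minus_Lhinv (dual_weight h))"
    using f u by (auto simp: dom_L_op)
  have l2: "f \<in> l2" "u \<in> l2" "?Lf \<in> l2" "?Rf \<in> l2" "?Lu \<in> l2" "?Ru \<in> l2"
    using fd ud by (auto intro: hL.log_dom_l2 hL.l2_log_lim Lhinv.l2_log_lim)
  have L: "l2inner ?Lf u = l2inner f ?Ru"
    by (rule l2inner_log_lim[OF fd(1) ud(2) inverse_dual_weight])
  have "l2inner ?Lu f = l2inner u ?Rf"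
    by (rule l2inner_log_lim[OF ud(1) fd(2)]) (simp add: dual_weight_def)
  then have R: "l2inner ?Rf u = l2inner f ?Lu"
    using l2inner_cnj[of ?Rf u] l2inner_cnj[of f ?Lu] l2 by simp
  have "l2inner (app (L_op h) f) u = cnj \<i> * (l2inner ?Rf u - l2inner ?Lf u)"
    unfolding app_L_op
    by (simp only: l2inner_scale_left[OF l2_diff[OF l2(4,3)] l2(2)] l2inner_diff_left[OF l2(4,3,2)])
  also have "\<dots> = \<i> * (l2inner f ?Ru - l2inner f ?Lu)"
    unfolding L R by (simp add: algebra_simps)
  also have "\<dots> = l2inner f (app (L_op (dual_weight h)) u)"
    unfolding app_L_op
    by (simp only: l2inner_scale_right[OF l2_diff[OF l2(6,5)] l2(1)] l2inner_diff_right[OF l2(6,5,1)])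
  finally show ?thesis .
qed

definition T_op :: "(nat \<Rightarrow> complex) \<Rightarrow> op" where
  "T_op g = op_scale (1/2) (op_add (L_op g) (L_op (dual_weight g)))"

lemma dom_T_op: "dom (T_op g) = dom (L_op g) \<inter> dom (L_op (dual_weight g))"
  by (simp add: T_op_def op_scale_def op_add_def dom_def)

lemma app_T_op: "app (T_op g) f = (\<lambda>n. 1/2 * (app (L_op g) f n + app (L_op (dual_weight g)) f n))"
  by (simp add: T_op_def op_scale_def op_add_def app_def)

lemma symmetric_T_op: "symmetric_op (T_op g)"
  unfolding symmetric_op_def
proof (intro conjI ballI subsetI)
  fix f assume "f \<in> dom (T_op g)"
  then show "f \<in> l2" using L_op_l2(1) by (auto simp: dom_T_op)
next
  fix f assume "f \<in> dom (T_op g)"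
  then show "app (T_op g) f \<in> l2"
    unfolding app_T_op dom_T_op by (intro l2_scale l2_add L_op_l2(2)) auto
next
  fix f u assume f: "f \<in> dom (T_op g)" and u: "u \<in> dom (T_op g)"
  let ?A = "app (L_op g)" and ?B = "app (L_op (dual_weight g))"
  have l2: "?A f \<in> l2" "?B f \<in> l2" "?A u \<in> l2" "?B u \<in> l2" "f \<in> l2" "u \<in> l2"
    using f u by (auto simp: dom_T_op L_op_l2)
  have A: "l2inner (?A f) u = l2inner f (?B u)"
    using l2inner_L_op[of f g u] f u by (simp add: dom_T_op)
  have B: "l2inner (?B f) u = l2inner f (?A u)"
    using l2inner_L_op[of f "dual_weight g" u] f u by (simp add: dom_T_op)
  have "l2inner (app (T_op g) f) u = cnj (1/2) * (l2inner (?A f) u + l2inner (?B f) u)"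
    unfolding app_T_op
    by (simp only: l2inner_scale_left[OF l2_add[OF l2(1,2)] l2(6)] l2inner_add_left[OF l2(1,2,6)])
  also have "\<dots> = 1/2 * (l2inner f (?A u) + l2inner f (?B u))"
    unfolding A B by simp
  also have "\<dots> = l2inner f (app (T_op g) u)"
    unfolding app_T_op
    by (simp only: l2inner_scale_right[OF l2_add[OF l2(3,4)] l2(5)] l2inner_add_right[OF l2(3,4,5)])
  finally show "l2inner (app (T_op g) f) u = l2inner f (app (T_op g) u)" .
qed

lemma densely_defined_T_op:
  assumes "\<And>j. g j \<noteq> 0" "slowly_decaying g" "slowly_decaying (dual_weight g)"
  shows "densely_defined (T_op g)"
  unfolding densely_defined_def
proof (intro ballI allI impI)
  fix f and e :: real assume "f \<in> l2" "e > 0"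
  then obtain t where "finite_support t" "l2norm (\<lambda>n. f n - t n) < e"
    using finite_support_dense by blast
  moreover have "t \<in> dom (T_op g)"
    using assms \<open>finite_support t\<close> by (simp add: dom_T_op finite_support_dom_L_op dual_weight_nonzero)
  ultimately show "\<exists>t\<in>dom (T_op g). l2norm (\<lambda>n. f n - t n) < e" by blast
qed

section \<open>The canonical commutation relation\<close>

lemma wshiftL_funpow_commutator:
  "of_nat n * (wshiftL h ^^ k) f n - (wshiftL h ^^ k) (\<lambda>m. of_nat m * f m) n
    = - of_nat k * (wshiftL h ^^ k) f n"
  by (simp add: wshiftL_funpow algebra_simps)

lemma wshiftR_funpow_commutator:
  "of_nat n * (wshiftR w ^^ k) f n - (wshiftR w ^^ k) (\<lambda>m. of_nat m * f m) n
    = of_nat k * (wshiftR w ^^ k) f n"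
  by (simp add: wshiftR_funpow of_nat_diff algebra_simps)

lemma log_series_commutator:
  fixes S :: "seq \<Rightarrow> seq" and c :: complex
  assumes "0 \<notin> A"
    and "\<And>k. of_nat n * (S ^^ k) f n - (S ^^ k) (\<lambda>m. of_nat m * f m) n = c * of_nat k * (S ^^ k) f n"
  shows "of_nat n * (\<Sum>k\<in>A. 1 / of_nat k * (S ^^ k) f n)
      - (\<Sum>k\<in>A. 1 / of_nat k * (S ^^ k) (\<lambda>m. of_nat m * f m) n) = c * (\<Sum>k\<in>A. (S ^^ k) f n)"
proof -
  have "of_nat n * (1 / of_nat k * (S ^^ k) f n) - 1 / of_nat k * (S ^^ k) (\<lambda>m. of_nat m * f m) n
      = c * (S ^^ k) f n" if "k \<in> A" for k
  proof -
    have "k \<noteq> 0"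
    proof
      assume "k = 0"
      then show False using assms(1) that by simp
    qed
    have "of_nat n * (1 / of_nat k * (S ^^ k) f n) - 1 / of_nat k * (S ^^ k) (\<lambda>m. of_nat m * f m) n
        = 1 / of_nat k * (of_nat n * (S ^^ k) f n - (S ^^ k) (\<lambda>m. of_nat m * f m) n)"
      by (simp add: algebra_simps)
    also have "\<dots> = c * (S ^^ k) f n" using \<open>k \<noteq> 0\<close> by (simp add: assms(2))
    finally show ?thesis .
  qed
  then show ?thesis
    by (simp add: sum_distrib_left sum_subtractf[symmetric])
qed

lemma sum_two_sided:
  fixes a :: "nat \<Rightarrow> 'a::comm_monoid_add"
  shows "(\<Sum>k=1..n. a (n - k)) + a n + (\<Sum>k=1..M. a (n + k)) = (\<Sum>m\<le>n + M. a m)"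
proof (induction M)
  case 0
  show ?case unfolding sum_reflect by (simp add: lessThan_Suc_atMost[symmetric] add.commute)
next
  case (Suc M)
  then show ?case by (simp add: add.assoc[symmetric])
qed

definition vanishing_moment :: "(nat \<Rightarrow> complex) \<Rightarrow> nat \<Rightarrow> seq set" where
  "vanishing_moment h M = {f. (\<forall>m\<ge>M. f m = 0) \<and> (\<Sum>m<M. partial_prod h m * f m) = 0}"

text \<open>The two-sided sum \<open>\<Sum>k\<ge>1. B (1/h)^k + 1 + \<Sum>k\<ge>1. C h^k\<close> of the weighted shifts maps \<open>f\<close>
  to \<open>(\<Sum>m. partial_prod h m * f m) / partial_prod h n\<close>, so it annihilates vectors of vanishing
  moment.\<close>

lemma two_sided_shift_sum:
  assumes nz: "\<And>j. h j \<noteq> 0" and f: "f \<in> vanishing_moment h M"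
  shows "(\<Sum>k=1..n. (wshiftR (\<lambda>j. 1 / h j) ^^ k) f n) + f n + (\<Sum>k=1..M. (wshiftL h ^^ k) f n) = 0"
proof -
  define a where "a m = partial_prod h m * f m" for m
  have "partial_prod h n * ((\<Sum>k=1..n. (wshiftR (\<lambda>j. 1 / h j) ^^ k) f n) + f n
      + (\<Sum>k=1..M. (wshiftL h ^^ k) f n)) = (\<Sum>k=1..n. a (n - k)) + a n + (\<Sum>k=1..M. a (n + k))"
    using nz by (simp add: a_def distrib_left sum_distrib_left wshiftR_funpow_partial_prod
        partial_prod_wshiftL_funpow partial_prod_nonzero)
  also have "\<dots> = (\<Sum>m\<le>n + M. a m)" by (rule sum_two_sided)
  also have "\<dots> = (\<Sum>m<M. a m)"
    using f by (intro sum.mono_neutral_right) (auto simp: a_def vanishing_moment_def)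
  also have "\<dots> = 0" using f by (simp add: a_def vanishing_moment_def)
  finally show ?thesis using partial_prod_nonzero[OF nz] by simp
qed

lemma norm_sum_moment_le:
  assumes "2 * M \<le> n"
  shows "cmod (\<Sum>m<M. a m * of_nat m / of_nat (n - m)) \<le> 2 * real M * (\<Sum>m<M. cmod (a m)) / real n"
proof -
  have "cmod (a m * of_nat m / of_nat (n - m)) \<le> cmod (a m) * (real M * (2 / real n))" if "m < M" for m
  proof -
    have "real m / real (n - m) \<le> real M * (2 / real n)"
      using that assms inverse_diff_le[of m n] by (simp add: divide_inverse mult_mono)
    then have "cmod (a m) * (real m / real (n - m)) \<le> cmod (a m) * (real M * (2 / real n))"
      by (rule mult_left_mono) simp
    then show ?thesis by (simp add: norm_mult norm_divide)
  qed
  then have "cmod (\<Sum>m<M. a m * of_nat m / of_nat (n - m)) \<le> (\<Sum>m<M. cmod (a m) * (real M * (2 / real n)))"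
    by (intro order_trans[OF norm_sum] sum_mono) auto
  also have "\<dots> = (\<Sum>m<M. cmod (a m)) * (real M * (2 / real n))"
    by (rule sum_distrib_right[symmetric])
  finally show ?thesis by (simp add: field_simps)
qed

text \<open>The vanishing moment improves the decay of the right logarithm by one power of \<open>n\<close>:
  \<open>n / (n - m) = 1 + m / (n - m)\<close> and the constant term sums to zero.\<close>

lemma num_wshiftR_log_sum_le:
  assumes nz: "\<And>j. h j \<noteq> 0" and f: "f \<in> vanishing_moment h M" and n: "2 * M \<le> n" "0 < n"
  shows "cmod (of_nat n * (\<Sum>k=1..n. 1 / of_nat k * (wshiftR (\<lambda>j. 1 / h j) ^^ k) f n))
    \<le> 2 * real M * (\<Sum>m<M. cmod (partial_prod h m * f m)) / (real n * cmod (partial_prod h n))"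
proof -
  define a where "a = (\<lambda>m. partial_prod h m * f m)"
  have M: "\<forall>m\<ge>M. f m = 0" and moment: "(\<Sum>m<M. a m) = 0"
    using f by (auto simp: vanishing_moment_def a_def)
  have "of_nat n * (a m / of_nat (n - m)) = a m + a m * of_nat m / of_nat (n - m)" if "m < M" for m
    using that n by (simp add: field_simps of_nat_diff)
  then have shift: "of_nat n * (\<Sum>m<M. a m / of_nat (n - m)) = (\<Sum>m<M. a m * of_nat m / of_nat (n - m))"
    using moment by (simp add: sum_distrib_left sum.distrib)
  have "of_nat n * (\<Sum>k=1..n. 1 / of_nat k * (wshiftR (\<lambda>j. 1 / h j) ^^ k) f n)
      = of_nat n * (\<Sum>m<M. a m / of_nat (n - m)) / partial_prod h n"
    using n by (subst wshiftR_log_sum[OF nz M]) (simp_all add: a_def)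
  also have "\<dots> = (\<Sum>m<M. a m * of_nat m / of_nat (n - m)) / partial_prod h n"
    by (simp only: shift)
  finally have "cmod (of_nat n * (\<Sum>k=1..n. 1 / of_nat k * (wshiftR (\<lambda>j. 1 / h j) ^^ k) f n))
      = cmod (\<Sum>m<M. a m * of_nat m / of_nat (n - m)) / cmod (partial_prod h n)"
    by (simp add: norm_divide)
  also have "\<dots> \<le> 2 * real M * (\<Sum>m<M. cmod (a m)) / real n / cmod (partial_prod h n)"
    by (rule divide_right_mono[OF norm_sum_moment_le[OF n(1)]]) simp
  finally show ?thesis by (simp add: a_def)
qed

lemma L_op_commutator:
  assumes nz: "\<And>j. h j \<noteq> 0" and slow: "slowly_decaying h" and f: "f \<in> vanishing_moment h M"
  shows "of_nat n * app (L_op h) f n - app (L_op h) (\<lambda>m. of_nat m * f m) n = - \<i> * f n"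
proof -
  define Nf where "Nf = (\<lambda>m. of_nat m * f m :: complex)"
  define R where "R u = (\<Sum>k=1..n. 1 / of_nat k * (wshiftR (\<lambda>j. 1 / h j) ^^ k) u n)" for u
  define L where "L u = (\<Sum>k=1..M. 1 / of_nat k * (wshiftL h ^^ k) u n)" for u
  have M: "\<forall>m\<ge>M. f m = 0" using f by (simp add: vanishing_moment_def)
  then have NM: "\<forall>m\<ge>M. Nf m = 0" by (simp add: Nf_def)
  have app: "app (L_op h) u n = \<i> * (R u - L u)" if "\<forall>m\<ge>M. u m = 0" for u
    using L_op_finite_support[OF nz slow that] by (simp add: R_def L_def)
  have "of_nat n * R f - R Nf = 1 * (\<Sum>k=1..n. (wshiftR (\<lambda>j. 1 / h j) ^^ k) f n)"
    unfolding R_def Nf_def by (rule log_series_commutator) (simp_all add: wshiftR_funpow_commutator)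
  moreover have "of_nat n * L f - L Nf = - 1 * (\<Sum>k=1..M. (wshiftL h ^^ k) f n)"
    unfolding L_def Nf_def by (rule log_series_commutator) (simp_all add: wshiftL_funpow_commutator)
  moreover have "of_nat n * app (L_op h) f n - app (L_op h) Nf n
      = \<i> * ((of_nat n * R f - R Nf) - (of_nat n * L f - L Nf))"
    by (simp add: app[OF M] app[OF NM] algebra_simps)
  ultimately have "of_nat n * app (L_op h) f n - app (L_op h) Nf n
      = \<i> * ((\<Sum>k=1..n. (wshiftR (\<lambda>j. 1 / h j) ^^ k) f n) + (\<Sum>k=1..M. (wshiftL h ^^ k) f n))"
    by simp
  also have "\<dots> = - \<i> * f n"
  proof -
    have "(\<Sum>k=1..n. (wshiftR (\<lambda>j. 1 / h j) ^^ k) f n) + (\<Sum>k=1..M. (wshiftL h ^^ k) f n) = - f n"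
      using two_sided_shift_sum[OF nz f, of n] by (simp add: eq_neg_iff_add_eq_0 add_ac)
    then show ?thesis by simp
  qed
  finally show ?thesis by (simp add: Nf_def)
qed

lemma num_L_op_l2:
  assumes nz: "\<And>j. h j \<noteq> 0" and slow: "slowly_decaying h" and f: "f \<in> vanishing_moment h M"
  shows "(\<lambda>n. of_nat n * app (L_op h) f n) \<in> l2"
proof (rule l2_eventually_le)
  define S where "S = (\<Sum>m<M. cmod (partial_prod h m * f m))"
  have M: "\<forall>m\<ge>M. f m = 0" using f by (simp add: vanishing_moment_def)
  show "summable (\<lambda>n. (2 * real M * S / (real n * cmod (partial_prod h n)))^2)"
    by (rule summable_inverse_partial_prod[OF slow])
  show "\<forall>\<^sub>F n in sequentially. cmod (of_nat n * app (L_op h) f n)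
      \<le> 2 * real M * S / (real n * cmod (partial_prod h n))"
  proof (rule eventually_mono[OF eventually_ge_at_top[of "2 * M + 1"]])
    fix n assume n: "2 * M + 1 \<le> n"
    have "(\<Sum>k=1..M. 1 / of_nat k * (wshiftL h ^^ k) f n) = 0"
      using M n by (intro sum.neutral) (simp add: wshiftL_funpow)
    then have "cmod (of_nat n * app (L_op h) f n)
        = cmod (of_nat n * (\<Sum>k=1..n. 1 / of_nat k * (wshiftR (\<lambda>j. 1 / h j) ^^ k) f n))"
      by (simp add: L_op_finite_support[OF nz slow M] norm_mult)
    also have "\<dots> \<le> 2 * real M * S / (real n * cmod (partial_prod h n))"
      unfolding S_def using n by (intro num_wshiftR_log_sum_le[OF nz f]) auto
    finally show "cmod (of_nat n * app (L_op h) f n) \<le> 2 * real M * S / (real n * cmod (partial_prod h n))" .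
  qed
qed

section \<open>The time operator\<close>

lemma linear_subspace_vanishing_moment: "linear_subspace (vanishing_moment h M)"
  unfolding linear_subspace_def vanishing_moment_def
  by (auto simp: sum.distrib distrib_left sum_distrib_left[symmetric] mult.left_commute)

lemma linear_subspace_Int: "linear_subspace U \<Longrightarrow> linear_subspace V \<Longrightarrow> linear_subspace (U \<inter> V)"
  by (simp add: linear_subspace_def)

lemma finite_support_vanishing_moment: "f \<in> vanishing_moment h M \<Longrightarrow> finite_support f"
  by (auto simp: vanishing_moment_def finite_support_def)

text \<open>Two linear conditions on \<open>f 0, f 1, f 2\<close>, both with coefficient \<open>partial_prod h 0 = 1\<close> at \<open>f 0\<close>;
  the cross product of the coefficient vectors is a nonzero solution unless they coincide.\<close>

lemma vanishing_moment_Int_nontrivial: "vanishing_moment h 3 \<inter> vanishing_moment h' 3 \<noteq> {\<lambda>n. 0}"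
proof -
  define a where "a = partial_prod h 1"
  define b where "b = partial_prod h 2"
  define a' where "a' = partial_prod h' 1"
  define b' where "b' = partial_prod h' 2"
  have moment: "(\<Sum>m<3. partial_prod p m * f m) = f 0 + partial_prod p 1 * f 1 + partial_prod p 2 * f 2"
    for p f by (simp add: numeral_3_eq_3 numeral_2_eq_2 partial_prod_def)
  obtain v where v: "v \<in> vanishing_moment h 3 \<inter> vanishing_moment h' 3" "v 1 \<noteq> 0 \<or> v 2 \<noteq> 0"
  proof (cases "a = a' \<and> b = b'")
    case True
    define v where "v n = (if n = 0 then a else if n = 1 then -1 else 0)" for n :: nat
    have "v \<in> vanishing_moment h 3 \<inter> vanishing_moment h' 3"
      using True by (simp add: vanishing_moment_def moment v_def a_def b_def a'_def b'_def)
    then show ?thesis using that[of v] by (simp add: v_def)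
  next
    case False
    define v where "v n = (if n = 0 then a * b' - b * a' else if n = 1 then b - b'
      else if n = 2 then a' - a else 0)" for n :: nat
    have "v \<in> vanishing_moment h 3 \<inter> vanishing_moment h' 3"
      by (simp add: vanishing_moment_def moment v_def a_def b_def a'_def b'_def algebra_simps)
    then show ?thesis using that[of v] False by (auto simp: v_def)
  qed
  show ?thesis
  proof
    assume "vanishing_moment h 3 \<inter> vanishing_moment h' 3 = {\<lambda>n. 0}"
    with v(1) have "v = (\<lambda>n. 0)" by blast
    with v(2) show False by simp
  qed
qed

lemma T_op_commutator:
  assumes "\<And>j. g j \<noteq> 0" "slowly_decaying g" "slowly_decaying (dual_weight g)"
    and "f \<in> vanishing_moment g M \<inter> vanishing_moment (dual_weight g) M"
  shows "of_nat n * app (T_op g) f n - app (T_op g) (\<lambda>m. of_nat m * f m) n = - \<i> * f n"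
proof -
  let ?A = "app (L_op g)" and ?B = "app (L_op (dual_weight g))" and ?Nf = "\<lambda>m. of_nat m * f m"
  have "of_nat n * app (T_op g) f n - app (T_op g) ?Nf n
      = 1/2 * ((of_nat n * ?A f n - ?A ?Nf n) + (of_nat n * ?B f n - ?B ?Nf n))"
    by (simp add: app_T_op algebra_simps)
  also have "\<dots> = - \<i> * f n"
  proof -
    have "of_nat n * ?A f n - ?A ?Nf n = - \<i> * f n"
      using assms by (intro L_op_commutator) auto
    moreover have "of_nat n * ?B f n - ?B ?Nf n = - \<i> * f n"
      using assms by (intro L_op_commutator dual_weight_nonzero) auto
    ultimately show ?thesis by simp
  qed
  finally show ?thesis .
qed

lemma num_T_op_l2:
  assumes "\<And>j. g j \<noteq> 0" "slowly_decaying g" "slowly_decaying (dual_weight g)"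
    and "f \<in> vanishing_moment g M \<inter> vanishing_moment (dual_weight g) M"
  shows "(\<lambda>n. of_nat n * app (T_op g) f n) \<in> l2"
proof -
  have "(\<lambda>n. 1/2 * (of_nat n * app (L_op g) f n + of_nat n * app (L_op (dual_weight g)) f n)) \<in> l2"
    using assms by (intro l2_scale l2_add num_L_op_l2) (auto simp: dual_weight_nonzero)
  then show ?thesis by (simp add: app_T_op algebra_simps)
qed

lemma time_operator_T_op:
  assumes nz: "\<And>j. g j \<noteq> 0"
    and slow: "slowly_decaying g" and slow': "slowly_decaying (dual_weight g)"
  shows "time_operator (T_op g) num_op"
proof -
  define V where "V = vanishing_moment g 3 \<inter> vanishing_moment (dual_weight g) 3"
  have dom_T: "f \<in> dom (T_op g)" if "finite_support f" for f
    using that by (simp add: dom_T_op finite_support_dom_L_op nz dual_weight_nonzero slow slow')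
  have fs: "finite_support f" "finite_support (\<lambda>n. of_nat n * f n)" if "f \<in> V" for f
    using that finite_support_vanishing_moment[of f g 3] by (auto simp: V_def finite_support_def)
  have dom_num: "dom num_op = {f \<in> l2. (\<lambda>n. of_nat n * f n) \<in> l2}"
    and app_num: "app num_op f = (\<lambda>n. of_nat n * f n)" for f
    by (simp_all add: num_op_def mult_op_def dom_def app_def)
  have "V \<subseteq> dom (op_comp num_op (T_op g)) \<inter> dom (op_comp (T_op g) num_op)"
  proof
    fix f assume f: "f \<in> V"
    have "app (T_op g) f \<in> l2"
      using symmetric_T_op dom_T[OF fs(1)[OF f]] by (simp add: symmetric_op_def)
    with f show "f \<in> dom (op_comp num_op (T_op g)) \<inter> dom (op_comp (T_op g) num_op)"
      using num_T_op_l2[OF nz slow slow'] by (simp add: dom_op_comp app_num dom_num dom_T fs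
          l2_finite_support V_def)
  qed
  moreover have "app (op_comp num_op (T_op g)) f n - app (op_comp (T_op g) num_op) f n = - \<i> * f n"
    if "f \<in> V" for f n
    using T_op_commutator[OF nz slow slow'] that by (simp add: app_op_comp app_num V_def)
  moreover have "linear_subspace V" "V \<noteq> {\<lambda>n. 0}"
    unfolding V_def by (intro linear_subspace_Int linear_subspace_vanishing_moment vanishing_moment_Int_nontrivial)+
  ultimately show ?thesis
    unfolding time_operator_def using symmetric_T_op densely_defined_T_op[OF nz slow slow'] by blast
qed

theorem mainTheorem13:
  fixes g :: "nat \<Rightarrow> complex"
  assumes nz: "\<And>k. g k \<noteq> 0"
    and bnd: "\<exists>n0::nat. \<exists>c1 c2 d1 d2 :: real. c1 > 0 \<and> c2 > 0 \<and>
               0 < d1 \<and> d1 < 1/2 \<and> 0 < d2 \<and> d2 < 1/2 \<and>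
               (\<forall>n>n0. c1 * real n powr (- d1) \<le> (\<Prod>k\<le>n. cmod (g k)) \<and>
                        (\<Prod>k\<le>n. cmod (g k)) \<le> c2 * real n powr d2)"
  shows "time_operator
           (op_scale (1/2) (op_add (L_op g) (L_op (\<lambda>n. 1 / cnj (g n))))) num_op"
proof -
  obtain n0 c1 c2 d1 d2 where c: "c1 > 0" "c2 > 0" and d: "0 < d1" "d1 < 1/2" "0 < d2" "d2 < 1/2"
    and bounds: "\<forall>n>n0. c1 * real n powr (- d1) \<le> (\<Prod>k\<le>n. cmod (g k))"
      "\<forall>n>n0. (\<Prod>k\<le>n. cmod (g k)) \<le> c2 * real n powr d2"
    using bnd by blast
  have "slowly_decaying g"
    using c d bounds by (intro slowly_decaying_if_prod_ge) auto
  moreover have "slowly_decaying (dual_weight g)"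
    using nz c d bounds by (intro slowly_decaying_dual_if_prod_le) auto
  ultimately have "time_operator (T_op g) num_op"
    by (rule time_operator_T_op[OF nz])
  then show ?thesis by (simp add: T_op_def dual_weight_def[abs_def])
qed

end
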